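(* Let $\Gamma$ be a cellular decomposition of a closed disc, equipped with a positive function $\rho$ on its edges, and let $\Gamma^*$ be its dual as described in the context. Choose a boundary vertex $y_0\in(\partial\Gamma^* )_0$, a value $f_0\in\mathbb{C}$, and a complex value $\int_e\alpha$ for each boundary edge $e\in(\partial\Gamma^* )_1$ not incident to $y_0$. Then there exists a unique function $f$ on the vertices of $\Gamma^*$, harmonic at every vertex of $\Gamma^*$ not in $(\partial\Gamma^* )_0$, such that $f(y_0)=f_0$ and $\int_e df=\int_e\alpha$ for every $e\in(\partial\Gamma^* )_1$ not incident to $y_0$.
   Context: Let $\Sigma$ be the disc and $\Sigma^2=\Sigma\cup\bar\Sigma$ its double (glued to the oppositely oriented copy along the boundary); $\Gamma$ doubles to a cellular decomposition $\Gamma^2$ of the sphere $\Sigma^2$ with Poincaré dual $\Gamma^{2*}$. Define $\Gamma^*:=\Sigma\cap\Gamma^{2*}$: its interior vertices are the dual vertices of the faces of $\Gamma$, its edges are the duals of interior edges of $\Gamma$ together with, for each boundary edge $e$ of $\Gamma$, the half-edge of $e^*$ lying in $\Sigma$; these half-edges form $(\partial\Gamma^* )_1$, and their endpoints on $\partial\Sigma$ form $(\partial\Gamma^* )_0$. Faces of $\Gamma^{2*}$ not contained in $\Sigma$ are discarded. $\rho$ is extended to $\Gamma^*_1$ by $\rho(e^* )=1/\rho(e)$. For a function $f$ on the vertices of $\Gamma^*$, $\int_{(u,v)}df=f(v)-f(u)$, and $f$ is harmonic at a vertex $x$ with neighbours $x_1,\dots,x_n$ if $\sum_k\rho(x,x_k)(f(x)-f(x_k))=0$.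 *)

theory Defs
  imports Complex_Main
begin

text \<open>Gamma is encoded as a combinatorial map (darts D, vertex rotation sigma,
  fixed-point-free edge involution alpha) cellularly embedded in the sphere
  (connected, Euler characteristic 2), together with a distinguished face Out,
  the complement of the disc, whose boundary walk is a simple closed curve
  (no repeated vertex, no edge traversed twice).  The faces of Gamma are the
  remaining faces; faces are orbits of sigma o alpha.\<close>

definition orb :: "('d \<Rightarrow> 'd) \<Rightarrow> 'd \<Rightarrow> 'd set" where
  "orb f x = {(f ^^ n) x | n. True}"

definition map_vertices :: "'d set \<Rightarrow> ('d \<Rightarrow> 'd) \<Rightarrow> 'd set set" where
  "map_vertices D \<sigma> = orb \<sigma> ` D"

definition map_edges :: "'d set \<Rightarrow> ('d \<Rightarrow> 'd) \<Rightarrow> 'd set set" where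
  "map_edges D \<alpha> = orb \<alpha> ` D"

definition face_of :: "('d \<Rightarrow> 'd) \<Rightarrow> ('d \<Rightarrow> 'd) \<Rightarrow> 'd \<Rightarrow> 'd set" where
  "face_of \<sigma> \<alpha> d = orb (\<sigma> \<circ> \<alpha>) d"

definition map_faces :: "'d set \<Rightarrow> ('d \<Rightarrow> 'd) \<Rightarrow> ('d \<Rightarrow> 'd) \<Rightarrow> 'd set set" where
  "map_faces D \<sigma> \<alpha> = face_of \<sigma> \<alpha> ` D"

definition disc_map :: "'d set \<Rightarrow> ('d \<Rightarrow> 'd) \<Rightarrow> ('d \<Rightarrow> 'd) \<Rightarrow> 'd set \<Rightarrow> bool" where
  "disc_map D \<sigma> \<alpha> Out \<longleftrightarrow>
     finite D \<and> D \<noteq> {} \<and>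
     bij_betw \<sigma> D D \<and> bij_betw \<alpha> D D \<and>
     (\<forall>d\<in>D. \<alpha> d \<noteq> d \<and> \<alpha> (\<alpha> d) = d) \<and>
     (\<forall>x\<in>D. \<forall>y\<in>D. (x, y) \<in> (\<Union>d\<in>D. {(d, \<sigma> d), (d, \<alpha> d)})\<^sup>*) \<and>
     int (card (map_vertices D \<sigma>)) - int (card (map_edges D \<alpha>))
       + int (card (map_faces D \<sigma> \<alpha>)) = 2 \<and>
     Out \<in> map_faces D \<sigma> \<alpha> \<and>
     inj_on (orb \<sigma>) Out \<and>
     (\<forall>d\<in>Out. \<alpha> d \<notin> Out)"

text \<open>Vertices of the dual Gamma*: interior dual vertices (faces of Gamma) and
  boundary points (one for each boundary edge of Gamma; the boundary edge
  containing dart d of the outer face gives the boundary point Bd d).\<close>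

datatype 'd dual_vertex = FaceV "'d set" | Bd 'd

definition dual_vertices :: "'d set \<Rightarrow> ('d \<Rightarrow> 'd) \<Rightarrow> ('d \<Rightarrow> 'd) \<Rightarrow> 'd set \<Rightarrow> 'd dual_vertex set" where
  "dual_vertices D \<sigma> \<alpha> Out =
     FaceV ` (map_faces D \<sigma> \<alpha> - {Out}) \<union> Bd ` Out"

definition dual_nbr :: "('d \<Rightarrow> 'd) \<Rightarrow> ('d \<Rightarrow> 'd) \<Rightarrow> 'd set \<Rightarrow> 'd \<Rightarrow> 'd dual_vertex" where
  "dual_nbr \<sigma> \<alpha> Out d =
     (if \<alpha> d \<in> Out then Bd (\<alpha> d) else FaceV (face_of \<sigma> \<alpha> (\<alpha> d)))"

text \<open>Harmonicity at the interior dual vertex of face F; the dual edge crossing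
  the edge e of Gamma has weight 1 / rho e.  Neighbours are counted with
  multiplicity, one term per edge-side (dart) of F.\<close>
definition harmonic_at_face ::
  "('d \<Rightarrow> 'd) \<Rightarrow> ('d \<Rightarrow> 'd) \<Rightarrow> 'd set \<Rightarrow> ('d set \<Rightarrow> real) \<Rightarrow> ('d dual_vertex \<Rightarrow> complex) \<Rightarrow> 'd set \<Rightarrow> bool" where
  "harmonic_at_face \<sigma> \<alpha> Out \<rho> f F \<longleftrightarrow>
     (\<Sum>d\<in>F. complex_of_real (1 / \<rho> (orb \<alpha> d)) * (f (FaceV F) - f (dual_nbr \<sigma> \<alpha> Out d))) = 0"

text \<open>Integral of df over the boundary half-edge of the boundary edge with outer
  dart d, oriented from the interior dual vertex to the boundary point.\<close>
definition bd_integral ::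
  "('d \<Rightarrow> 'd) \<Rightarrow> ('d \<Rightarrow> 'd) \<Rightarrow> ('d dual_vertex \<Rightarrow> complex) \<Rightarrow> 'd \<Rightarrow> complex" where
  "bd_integral \<sigma> \<alpha> f d = f (Bd d) - f (FaceV (face_of \<sigma> \<alpha> (\<alpha> d)))"

end

theory Submission
  imports Defs "Jordan_Normal_Form.Determinant"
begin

text \<open>Eliminating the boundary points by means of the prescribed increments turns the problem into a
  square linear system for the values at the faces: a weighted Laplacian of the interior dual graph
  with a Dirichlet term only along the half-edge ending at y0. By finite dimensionality it suffices
  that the homogeneous system has only the trivial solution, which is the maximum principle. On the
  set of faces where a real solution attains a positive maximum, harmonicity forces every interior
  neighbour to attain it too; since the boundary of the disc is a simple closed curve, this set
  reaches the face adjacent to y0, where the Dirichlet term forces the maximum to be zero.\<close>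

section \<open>Orbits of a permutation of a finite set\<close>

lemma bij_betw_funpow_returns:
  assumes "finite D" "bij_betw f D D" "x \<in> D"
  shows "\<exists>N>0. (f ^^ N) x = x"
proof -
  have "range (\<lambda>i. (f ^^ i) x) \<subseteq> D"
    using bij_betw_apply[OF bij_betw_funpow[OF assms(2)] assms(3)] by auto
  then have "\<not> inj (\<lambda>i. (f ^^ i) x)"
    using assms(1) finite_subset finite_imageD infinite_UNIV_nat by blast
  then obtain i j where "i < j" "(f ^^ i) x = (f ^^ j) x"
    unfolding inj_def by (metis linorder_neqE_nat)
  then obtain k where k: "j = i + k" "k > 0"
    using less_imp_add_positive by blast
  with \<open>(f ^^ i) x = (f ^^ j) x\<close> have "(f ^^ i) ((f ^^ k) x) = (f ^^ i) x"
    by (simp add: funpow_add)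
  moreover have "inj_on (f ^^ i) D" "(f ^^ k) x \<in> D"
    using bij_betw_funpow[OF assms(2)] assms(3) by (auto simp: bij_betw_def)
  ultimately have "(f ^^ k) x = x"
    using assms(3) by (meson inj_onD)
  with k show ?thesis by blast
qed

lemma orb_self: "x \<in> orb f x"
  unfolding orb_def by (auto intro: exI[of _ 0])

lemma orb_step: "f x \<in> orb f x"
  unfolding orb_def by (auto intro!: exI[of _ 1])

lemma orb_subset_orb:
  assumes "y \<in> orb f x"
  shows "orb f y \<subseteq> orb f x"
proof
  fix z assume "z \<in> orb f y"
  then obtain m where "z = (f ^^ m) y" unfolding orb_def by blast
  moreover obtain k where "y = (f ^^ k) x" using assms unfolding orb_def by blast
  ultimately have "z = (f ^^ (m + k)) x" by (simp add: funpow_add)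
  then show "z \<in> orb f x" unfolding orb_def by blast
qed

lemma orb_subset:
  assumes "bij_betw f D D" "x \<in> D"
  shows "orb f x \<subseteq> D"
  using bij_betw_apply[OF bij_betw_funpow[OF assms(1)] assms(2)] unfolding orb_def by auto

lemma orb_sym:
  assumes "finite D" "bij_betw f D D" "x \<in> D" "y \<in> orb f x"
  shows "x \<in> orb f y"
proof -
  obtain k where k: "y = (f ^^ k) x" using assms(4) unfolding orb_def by auto
  obtain N where N: "N > 0" "(f ^^ N) x = x" using bij_betw_funpow_returns[OF assms(1-3)] by blast
  have "((f ^^ N) ^^ k) x = x" using N(2) by (induction k) simp_all
  then have "(f ^^ (N * k - k + k)) x = x"
    using N(1) by (simp add: funpow_mult)
  then have "x = (f ^^ (N * k - k)) y"
    unfolding k by (simp add: funpow_add)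
  then show ?thesis unfolding orb_def by blast
qed

lemma orb_eq:
  assumes "finite D" "bij_betw f D D" "x \<in> D" "y \<in> orb f x"
  shows "orb f y = orb f x"
  using orb_subset_orb[OF assms(4)] orb_subset_orb[OF orb_sym[OF assms]] by (rule equalityI)

section \<open>Faces of a disc and connectivity of the interior dual\<close>

locale disc_combinatorial_map =
  fixes D :: "'d set" and \<sigma> \<alpha> :: "'d \<Rightarrow> 'd" and Out :: "'d set"
  assumes disc_map: "disc_map D \<sigma> \<alpha> Out"
begin

abbreviation face :: "'d \<Rightarrow> 'd set" where "face \<equiv> face_of \<sigma> \<alpha>"
abbreviation interior_faces :: "'d set set" where "interior_faces \<equiv> map_faces D \<sigma> \<alpha> - {Out}"

lemma finite_darts: "finite D"
  and bij_\<sigma>: "bij_betw \<sigma> D D"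
  and bij_\<alpha>: "bij_betw \<alpha> D D"
  and \<alpha>_involution: "\<And>d. d \<in> D \<Longrightarrow> \<alpha> (\<alpha> d) = d"
  and darts_connected: "\<And>x y. x \<in> D \<Longrightarrow> y \<in> D \<Longrightarrow> (x, y) \<in> (\<Union>d\<in>D. {(d, \<sigma> d), (d, \<alpha> d)})\<^sup>*"
  and outer_face: "Out \<in> map_faces D \<sigma> \<alpha>"
  and boundary_simple: "inj_on (orb \<sigma>) Out"
  and boundary_edge_crosses: "\<And>d. d \<in> Out \<Longrightarrow> \<alpha> d \<notin> Out"
  using disc_map unfolding disc_map_def by auto

lemma \<sigma>_in_D: "x \<in> D \<Longrightarrow> \<sigma> x \<in> D"
  using bij_\<sigma> by (rule bij_betw_apply)

lemma \<alpha>_in_D: "x \<in> D \<Longrightarrow> \<alpha> x \<in> D"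
  using bij_\<alpha> by (rule bij_betw_apply)

lemma bij_face_permutation: "bij_betw (\<sigma> \<circ> \<alpha>) D D"
  using bij_betw_trans[OF bij_\<alpha> bij_\<sigma>] .

lemma face_subset: "x \<in> D \<Longrightarrow> face x \<subseteq> D"
  unfolding face_of_def using orb_subset[OF bij_face_permutation] .

lemma face_self: "x \<in> face x"
  unfolding face_of_def by (rule orb_self)

lemma face_eq: "x \<in> D \<Longrightarrow> y \<in> face x \<Longrightarrow> face y = face x"
  unfolding face_of_def using orb_eq[OF finite_darts bij_face_permutation] .

lemma face_\<sigma>_\<alpha>: "x \<in> D \<Longrightarrow> face (\<sigma> (\<alpha> x)) = face x"
  using face_eq[of x "\<sigma> (\<alpha> x)"] orb_step[of "\<sigma> \<circ> \<alpha>" x] unfolding face_of_def by auto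

lemma face_\<sigma>: "y \<in> D \<Longrightarrow> face (\<sigma> y) = face (\<alpha> y)"
  using face_\<sigma>_\<alpha>[OF \<alpha>_in_D, of y] \<alpha>_involution by simp

lemma face_of_member: "F \<in> map_faces D \<sigma> \<alpha> \<Longrightarrow> d \<in> F \<Longrightarrow> face d = F"
  unfolding map_faces_def using face_eq by auto

lemma map_face_subset: "F \<in> map_faces D \<sigma> \<alpha> \<Longrightarrow> F \<subseteq> D"
  unfolding map_faces_def using face_subset by auto

lemma Out_subset: "Out \<subseteq> D"
  using map_face_subset[OF outer_face] .

lemma in_Out_iff: "x \<in> D \<Longrightarrow> x \<in> Out \<longleftrightarrow> face x = Out"
  using face_of_member[OF outer_face, of x] face_self[of x] by auto

lemma face_interior: "x \<in> D \<Longrightarrow> x \<notin> Out \<Longrightarrow> face x \<in> interior_faces"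
  using in_Out_iff unfolding map_faces_def by auto

definition interior_dual_closed :: "'d set set \<Rightarrow> bool" where
  "interior_dual_closed S \<longleftrightarrow>
     S \<subseteq> interior_faces \<and> (\<forall>F\<in>S. \<forall>d\<in>F. \<alpha> d \<notin> Out \<longrightarrow> face (\<alpha> d) \<in> S)"

text \<open>Rotating around the vertex of a boundary dart, the boundary walk is met again only at that
  dart itself, because the boundary of the disc passes through each vertex once.\<close>

lemma boundary_vertex_rotation:
  assumes b: "b \<in> Out"
  shows "\<exists>j>0. \<sigma> ((\<sigma> ^^ j) b) = b \<and> (\<forall>m. 0 < m \<and> m \<le> j \<longrightarrow> (\<sigma> ^^ m) b \<notin> Out)"
proof -
  have bD: "b \<in> D" using b Out_subset by blast
  obtain N where N: "N > 0" "(\<sigma> ^^ N) b = b"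
    using bij_betw_funpow_returns[OF finite_darts bij_\<sigma> bD] by blast
  define k where "k = (LEAST k. k > 0 \<and> (\<sigma> ^^ k) b \<in> Out)"
  have k: "k > 0" "(\<sigma> ^^ k) b \<in> Out"
    using LeastI[of "\<lambda>k. k > 0 \<and> (\<sigma> ^^ k) b \<in> Out" N] N b unfolding k_def by auto
  have before_k: "(\<sigma> ^^ m) b \<notin> Out" if "0 < m" "m < k" for m
    using not_less_Least[of m "\<lambda>k. k > 0 \<and> (\<sigma> ^^ k) b \<in> Out"] that unfolding k_def by auto
  have "orb \<sigma> ((\<sigma> ^^ k) b) = orb \<sigma> b"
    by (rule orb_eq[OF finite_darts bij_\<sigma> bD]) (auto simp: orb_def)
  then have returns: "(\<sigma> ^^ k) b = b"
    using inj_onD[OF boundary_simple _ k(2) b] by blast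
  have "k \<noteq> 1"
  proof
    assume "k = 1"
    then have "face (\<sigma> b) = Out" using k(2) in_Out_iff[OF \<sigma>_in_D[OF bD]] by simp
    then have "\<alpha> b \<in> Out" using face_\<sigma>[OF bD] in_Out_iff[OF \<alpha>_in_D[OF bD]] by simp
    then show False using boundary_edge_crosses[OF b] by blast
  qed
  define j where "j = k - 1"
  have j: "k = Suc j" "j > 0" using k(1) \<open>k \<noteq> 1\<close> unfolding j_def by auto
  then have "\<sigma> ((\<sigma> ^^ j) b) = b" using returns by simp
  moreover have "\<forall>m. 0 < m \<and> m \<le> j \<longrightarrow> (\<sigma> ^^ m) b \<notin> Out" using before_k j(1) by auto
  ultimately show ?thesis using j(2) by blast
qed

lemma faces_around_boundary_vertex:
  assumes S: "interior_dual_closed S" and b: "b \<in> Out" and start: "face (\<alpha> b) \<in> S"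
    and interior: "\<forall>m. 0 < m \<and> m \<le> j \<longrightarrow> (\<sigma> ^^ m) b \<notin> Out"
  shows "0 < m \<Longrightarrow> m \<le> j \<Longrightarrow> face ((\<sigma> ^^ m) b) \<in> S"
proof (induction m)
  case 0
  then show ?case by simp
next
  case (Suc m)
  have bD: "b \<in> D" using b Out_subset by blast
  show ?case
  proof (cases "m = 0")
    case True
    then show ?thesis using start face_\<sigma>[OF bD] by simp
  next
    case False
    let ?y = "(\<sigma> ^^ m) b"
    have yD: "?y \<in> D" using bij_betw_apply[OF bij_betw_funpow[OF bij_\<sigma>] bD] .
    have "face ?y \<in> S" using Suc False by simp
    moreover have "\<sigma> ?y \<notin> Out" using interior Suc.prems by auto
    then have "\<alpha> ?y \<notin> Out"
      using in_Out_iff[OF \<sigma>_in_D[OF yD]] in_Out_iff[OF \<alpha>_in_D[OF yD]] face_\<sigma>[OF yD] by simp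
    ultimately have "face (\<alpha> ?y) \<in> S"
      using S face_self unfolding interior_dual_closed_def by blast
    then show ?thesis using face_\<sigma>[OF yD] by simp
  qed
qed

lemma boundary_face_predecessor:
  assumes S: "interior_dual_closed S" and d: "d \<in> Out" and succ: "face (\<alpha> (\<sigma> (\<alpha> d))) \<in> S"
  shows "face (\<alpha> d) \<in> S"
proof -
  let ?b = "\<sigma> (\<alpha> d)"
  have dD: "d \<in> D" using d Out_subset by blast
  have b: "?b \<in> Out"
    using d in_Out_iff[OF dD] in_Out_iff[OF \<sigma>_in_D[OF \<alpha>_in_D[OF dD]]] face_\<sigma>_\<alpha>[OF dD] by simp
  obtain j where j: "j > 0" "\<sigma> ((\<sigma> ^^ j) ?b) = ?b"
    and interior: "\<forall>m. 0 < m \<and> m \<le> j \<longrightarrow> (\<sigma> ^^ m) ?b \<notin> Out"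
    using boundary_vertex_rotation[OF b] by blast
  have "(\<sigma> ^^ j) ?b \<in> D"
    using bij_betw_apply[OF bij_betw_funpow[OF bij_\<sigma>]] b Out_subset by blast
  then have "(\<sigma> ^^ j) ?b = \<alpha> d"
    using inj_onD[OF bij_betw_imp_inj_on[OF bij_\<sigma>] j(2)] \<alpha>_in_D[OF dD] by blast
  then show ?thesis
    using faces_around_boundary_vertex[OF S b succ interior, of j] j(1) by simp
qed

lemma boundary_face_from_successor:
  assumes S: "interior_dual_closed S"
  shows "d \<in> Out \<Longrightarrow> face (\<alpha> (((\<sigma> \<circ> \<alpha>) ^^ n) d)) \<in> S \<Longrightarrow> face (\<alpha> d) \<in> S"
proof (induction n arbitrary: d)
  case 0
  then show ?case by simp
next
  case (Suc n)
  have dD: "d \<in> D" using Suc.prems(1) Out_subset by blast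
  have "\<sigma> (\<alpha> d) \<in> Out"
    using Suc.prems(1) in_Out_iff[OF dD] in_Out_iff[OF \<sigma>_in_D[OF \<alpha>_in_D[OF dD]]] face_\<sigma>_\<alpha>[OF dD]
    by simp
  moreover have "face (\<alpha> (((\<sigma> \<circ> \<alpha>) ^^ n) (\<sigma> (\<alpha> d)))) \<in> S"
    using Suc.prems(2) by (simp add: funpow_Suc_right comp_def del: funpow.simps)
  ultimately have "face (\<alpha> (\<sigma> (\<alpha> d))) \<in> S" by (rule Suc.IH)
  then show ?case by (rule boundary_face_predecessor[OF S Suc.prems(1)])
qed

lemma boundary_faces_all_or_none:
  assumes S: "interior_dual_closed S" and "d \<in> Out" "d' \<in> Out" "face (\<alpha> d') \<in> S"
  shows "face (\<alpha> d) \<in> S"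
proof -
  have "Out = face d" using face_of_member[OF outer_face \<open>d \<in> Out\<close>] by simp
  then obtain n where "d' = ((\<sigma> \<circ> \<alpha>) ^^ n) d"
    using \<open>d' \<in> Out\<close> unfolding face_of_def orb_def by blast
  then show ?thesis using boundary_face_from_successor[OF S \<open>d \<in> Out\<close>] assms(4) by blast
qed

lemma closed_dart_set_contains_all:
  assumes "x \<in> X" "x \<in> D" "y \<in> D" and closed: "\<forall>z\<in>X. \<sigma> z \<in> X \<and> \<alpha> z \<in> X"
  shows "y \<in> X"
  using darts_connected[OF assms(2,3)]
proof (induction rule: rtrancl_induct)
  case base
  then show ?case using assms(1) .
next
  case (step y z)
  then have "z = \<sigma> y \<or> z = \<alpha> y" by blast
  then show ?case using closed step.IH by blast
qed

lemma interior_dual_closed_reaches_boundary: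
  assumes S: "interior_dual_closed S" and "S \<noteq> {}" and d: "d \<in> Out"
  shows "face (\<alpha> d) \<in> S"
proof (rule ccontr)
  assume "face (\<alpha> d) \<notin> S"
  then have no_boundary_face: "\<forall>e\<in>Out. face (\<alpha> e) \<notin> S"
    using boundary_faces_all_or_none[OF S d] by blast
  have SI: "S \<subseteq> interior_faces" using S unfolding interior_dual_closed_def by blast
  have closed: "\<forall>z\<in>\<Union>S. \<sigma> z \<in> \<Union>S \<and> \<alpha> z \<in> \<Union>S"
  proof
    fix z assume "z \<in> \<Union>S"
    then obtain F where F: "F \<in> S" "z \<in> F" by blast
    have FI: "F \<in> map_faces D \<sigma> \<alpha>" using F(1) SI by blast
    have zD: "z \<in> D" using map_face_subset[OF FI] F(2) by blast
    have "\<alpha> z \<notin> Out"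
      using no_boundary_face F face_of_member[OF FI F(2)] \<alpha>_involution[OF zD] by force
    then have "face (\<alpha> z) \<in> S" using S F unfolding interior_dual_closed_def by blast
    moreover have "\<alpha> z \<in> face (\<alpha> z)" "\<sigma> z \<in> face (\<alpha> z)"
      using face_self face_self[of "\<sigma> z"] face_\<sigma>[OF zD] by simp_all
    ultimately show "\<sigma> z \<in> \<Union>S \<and> \<alpha> z \<in> \<Union>S" by blast
  qed
  obtain F where F: "F \<in> S" using \<open>S \<noteq> {}\<close> by blast
  then obtain x where x: "x \<in> D" "F = face x" using SI unfolding map_faces_def by blast
  have "d \<in> \<Union>S"
    using closed_dart_set_contains_all[OF _ x(1) _ closed] F x face_self Out_subset d by blast
  then obtain G where G: "G \<in> S" "d \<in> G" by blast
  then have "face d = G" using face_of_member SI by blast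
  moreover have "face d = Out" using face_of_member[OF outer_face d] .
  ultimately show False using G(1) SI by blast
qed

end

section \<open>Square linear systems\<close>

lemma mat_vec_solvable_of_trivial_kernel:
  fixes A :: "'a :: field mat"
  assumes A: "A \<in> carrier_mat n n"
    and kernel: "\<And>v. v \<in> carrier_vec n \<Longrightarrow> A *\<^sub>v v = 0\<^sub>v n \<Longrightarrow> v = 0\<^sub>v n"
    and b: "b \<in> carrier_vec n"
  shows "\<exists>x\<in>carrier_vec n. A *\<^sub>v x = b"
proof -
  have "det A \<noteq> 0" using det_0_iff_vec_prod_zero_field[OF A] kernel by blast
  then have "A \<in> Units (ring_mat TYPE('a) n ())" by (rule det_non_zero_imp_unit[OF A])
  then obtain B where B: "B \<in> carrier_mat n n" "A * B = 1\<^sub>m n"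
    unfolding Units_def ring_mat_def by auto
  have "A *\<^sub>v (B *\<^sub>v b) = b" using assoc_mult_mat_vec[OF A B(1) b] B(2) b by simp
  then show ?thesis using B(1) b by (intro bexI[of _ "B *\<^sub>v b"]) auto
qed

lemma finite_linear_system_solvable:
  fixes C :: "'x \<Rightarrow> 'x \<Rightarrow> 'a :: field"
  assumes fin: "finite I"
    and injective: "\<And>h. \<forall>F\<in>I. (\<Sum>G\<in>I. C F G * h G) = 0 \<Longrightarrow> \<forall>G\<in>I. h G = 0"
  shows "\<exists>h. \<forall>F\<in>I. (\<Sum>G\<in>I. C F G * h G) = b F"
proof -
  define n where "n = card I"
  obtain idx where idx: "bij_betw idx {..<n} I"
    using ex_bij_betw_nat_finite[OF fin] unfolding n_def atLeast0LessThan by blast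
  define pos where "pos = inv_into {..<n} idx"
  have pos: "pos G < n" "idx (pos G) = G" if "G \<in> I" for G
    using that bij_betw_apply[OF bij_betw_inv_into[OF idx]] bij_betw_inv_into_right[OF idx]
    unfolding pos_def by auto
  have pos_idx: "pos (idx i) = i" if "i < n" for i
    using bij_betw_inv_into_left[OF idx] that unfolding pos_def by simp
  define A where "A = mat n n (\<lambda>(i, j). C (idx i) (idx j))"
  have A: "A \<in> carrier_mat n n" unfolding A_def by simp
  have row: "(A *\<^sub>v v) $ pos F = (\<Sum>G\<in>I. C F G * v $ pos G)" if "v \<in> carrier_vec n" "F \<in> I" for v F
  proof -
    have "(A *\<^sub>v v) $ pos F = (\<Sum>j<n. C F (idx j) * v $ j)"
      using that pos unfolding A_def by (simp add: mult_mat_vec_def scalar_prod_def lessThan_atLeast0)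
    also have "\<dots> = (\<Sum>G\<in>I. C F G * v $ pos G)"
      using sum.reindex_bij_betw[OF idx, of "\<lambda>G. C F G * v $ pos G"] pos_idx by simp
    finally show ?thesis .
  qed
  have kernel: "v = 0\<^sub>v n" if v: "v \<in> carrier_vec n" "A *\<^sub>v v = 0\<^sub>v n" for v
  proof -
    have "\<forall>F\<in>I. (\<Sum>G\<in>I. C F G * v $ pos G) = 0" using row v pos by (metis index_zero_vec(1))
    then have "v $ i = 0" if "i < n" for i
      using bij_betw_apply[OF idx] pos_idx that by (metis injective lessThan_iff)
    then show ?thesis using v(1) by (intro eq_vecI) auto
  qed
  have "\<exists>x\<in>carrier_vec n. A *\<^sub>v x = vec n (\<lambda>i. b (idx i))"
    by (rule mat_vec_solvable_of_trivial_kernel[OF A]) (auto intro: kernel)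
  then obtain x where x: "x \<in> carrier_vec n" "A *\<^sub>v x = vec n (\<lambda>i. b (idx i))" by blast
  have "(\<Sum>G\<in>I. C F G * x $ pos G) = b F" if "F \<in> I" for F
  proof -
    have "(\<Sum>G\<in>I. C F G * x $ pos G) = (A *\<^sub>v x) $ pos F" using row[OF x(1) that] by (rule sym)
    also have "\<dots> = b F" using x(2) pos[OF that] by simp
    finally show ?thesis .
  qed
  then show ?thesis by (intro exI[of _ "\<lambda>G. x $ pos G"]) simp
qed

section \<open>The dual Laplacian and the maximum principle\<close>

locale weighted_disc_map = disc_combinatorial_map D \<sigma> \<alpha> Out
  for D :: "'d set" and \<sigma> \<alpha> :: "'d \<Rightarrow> 'd" and Out :: "'d set" +
  fixes \<rho> :: "'d set \<Rightarrow> real" and d0 :: 'd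
  assumes \<rho>_pos: "\<forall>e\<in>map_edges D \<alpha>. \<rho> e > 0"
    and d0_boundary: "d0 \<in> Out"
begin

definition conductance :: "'d \<Rightarrow> real" where
  "conductance d = 1 / \<rho> (orb \<alpha> d)"

text \<open>Harmonicity at the faces once the boundary points are eliminated: only the boundary half-edge
  at d0 keeps a Dirichlet term, while along every other boundary half-edge the increment is prescribed
  and moves into the right-hand side.\<close>

definition dual_laplacian :: "('d set \<Rightarrow> 'a :: real_algebra_1) \<Rightarrow> 'd set \<Rightarrow> 'a" where
  "dual_laplacian h F = (\<Sum>d\<in>F. of_real (conductance d) *
     (if \<alpha> d = d0 then h F else if \<alpha> d \<in> Out then 0 else h F - h (face (\<alpha> d))))"

definition boundary_load :: "complex \<Rightarrow> ('d \<Rightarrow> complex) \<Rightarrow> 'd set \<Rightarrow> complex" where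
  "boundary_load c a F = (\<Sum>d\<in>F. of_real (conductance d) *
     (if \<alpha> d = d0 then c else if \<alpha> d \<in> Out then a (\<alpha> d) else 0))"

lemma conductance_pos: "d \<in> D \<Longrightarrow> conductance d > 0"
  using \<rho>_pos unfolding conductance_def map_edges_def by auto

lemma finite_interior_faces: "finite interior_faces"
  using finite_darts unfolding map_faces_def by simp

lemma dual_laplacian_diff: "dual_laplacian (\<lambda>G. x G - y G) F = dual_laplacian x F - dual_laplacian y F"
  unfolding dual_laplacian_def sum_subtractf[symmetric] by (intro sum.cong refl) (simp add: algebra_simps)

lemma dual_laplacian_uminus: "dual_laplacian (\<lambda>G. - u G) F = - dual_laplacian u F"
  unfolding dual_laplacian_def sum_negf[symmetric] by (intro sum.cong refl) (simp add: algebra_simps)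

lemma Re_dual_laplacian: "Re (dual_laplacian h F) = dual_laplacian (\<lambda>G. Re (h G)) F"
  unfolding dual_laplacian_def Re_sum by (intro sum.cong refl) simp

lemma Im_dual_laplacian: "Im (dual_laplacian h F) = dual_laplacian (\<lambda>G. Im (h G)) F"
  unfolding dual_laplacian_def Im_sum by (intro sum.cong refl) simp

text \<open>Every summand is nonnegative at a nonnegative maximum, so each one vanishes.\<close>

lemma dual_laplacian_at_maximum:
  fixes u :: "'d set \<Rightarrow> real"
  assumes F: "F \<in> interior_faces" and zero: "dual_laplacian u F = 0"
    and max: "\<forall>G\<in>interior_faces. u G \<le> u F" and nonneg: "0 \<le> u F" and d: "d \<in> F"
  shows "(\<alpha> d = d0 \<longrightarrow> u F = 0) \<and> (\<alpha> d \<notin> Out \<longrightarrow> u (face (\<alpha> d)) = u F)"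
proof -
  have FD: "F \<subseteq> D" using F map_face_subset by blast
  define t where "t d = conductance d *
     (if \<alpha> d = d0 then u F else if \<alpha> d \<in> Out then 0 else u F - u (face (\<alpha> d)))" for d
  have "t d' \<ge> 0" if "d' \<in> F" for d'
    using conductance_pos[of d'] that FD nonneg max face_interior[OF \<alpha>_in_D, of d']
    unfolding t_def by (auto intro!: mult_nonneg_nonneg)
  moreover have "sum t F = 0" using zero unfolding dual_laplacian_def t_def by simp
  moreover have "finite F" using FD finite_darts finite_subset by blast
  ultimately have "t d = 0" using sum_nonneg_eq_0_iff d by blast
  then show ?thesis using conductance_pos[of d] d FD d0_boundary unfolding t_def by (auto split: if_splits)
qed

lemma maximum_principle:
  fixes u :: "'d set \<Rightarrow> real"
  assumes harmonic: "\<forall>F\<in>interior_faces. dual_laplacian u F = 0"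
  shows "\<forall>F\<in>interior_faces. u F \<le> 0"
proof (rule ccontr)
  assume "\<not> ?thesis"
  then obtain F1 where F1: "F1 \<in> interior_faces" "u F1 > 0" by force
  define M where "M = Max (u ` interior_faces)"
  have M_max: "u G \<le> M" if "G \<in> interior_faces" for G
    unfolding M_def using finite_interior_faces that by simp
  have "M \<in> u ` interior_faces"
    unfolding M_def using finite_interior_faces F1(1) by (intro Max_in) blast+
  then obtain G0 where G0: "G0 \<in> interior_faces" "u G0 = M" by blast
  have M_pos: "M > 0" using M_max[OF F1(1)] F1(2) by linarith
  define S where "S = {G \<in> interior_faces. u G = M}"
  have at_max: "(\<alpha> d = d0 \<longrightarrow> M = 0) \<and> (\<alpha> d \<notin> Out \<longrightarrow> u (face (\<alpha> d)) = M)"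
    if "G \<in> S" "d \<in> G" for G d
    using dual_laplacian_at_maximum[of G u d] that harmonic M_max M_pos unfolding S_def by auto
  have "interior_dual_closed S"
    unfolding interior_dual_closed_def
  proof (intro conjI ballI impI)
    fix G d assume "G \<in> S" "d \<in> G" "\<alpha> d \<notin> Out"
    moreover have "d \<in> D" using \<open>G \<in> S\<close> \<open>d \<in> G\<close> map_face_subset unfolding S_def by blast
    ultimately show "face (\<alpha> d) \<in> S"
      using at_max face_interior[OF \<alpha>_in_D] unfolding S_def by blast
  qed (auto simp: S_def)
  then have "face (\<alpha> d0) \<in> S"
    using interior_dual_closed_reaches_boundary d0_boundary G0 unfolding S_def by blast
  moreover have "\<alpha> (\<alpha> d0) = d0" using \<alpha>_involution d0_boundary Out_subset by blast
  ultimately have "M = 0" using at_max face_self by blast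
  with M_pos show False by simp
qed

lemma dual_laplacian_injective:
  fixes h :: "'d set \<Rightarrow> complex"
  assumes "\<forall>F\<in>interior_faces. dual_laplacian h F = 0"
  shows "\<forall>F\<in>interior_faces. h F = 0"
proof -
  have real_zero: "\<forall>F\<in>interior_faces. u F = 0"
    if "\<forall>F\<in>interior_faces. dual_laplacian u F = 0" for u :: "'d set \<Rightarrow> real"
  proof -
    have "\<forall>F\<in>interior_faces. - u F \<le> 0"
      using maximum_principle[of "\<lambda>G. - u G"] that by (simp add: dual_laplacian_uminus)
    with maximum_principle[OF that] show ?thesis by (meson antisym neg_le_0_iff_le)
  qed
  have "\<forall>F\<in>interior_faces. Re (h F) = 0"
    using real_zero[of "\<lambda>G. Re (h G)"] assms by (simp flip: Re_dual_laplacian)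
  moreover have "\<forall>F\<in>interior_faces. Im (h F) = 0"
    using real_zero[of "\<lambda>G. Im (h G)"] assms by (simp flip: Im_dual_laplacian)
  ultimately show ?thesis by (simp add: complex_eq_iff)
qed

lemma dual_laplacian_as_sum:
  fixes h :: "'d set \<Rightarrow> complex"
  assumes F: "F \<in> interior_faces"
  shows "dual_laplacian h F = (\<Sum>G\<in>interior_faces. dual_laplacian (\<lambda>H. of_bool (H = G)) F * h G)"
proof -
  have delta: "(\<Sum>G\<in>interior_faces. of_bool (H = G) * h G) = h H" if "H \<in> interior_faces" for H
  proof -
    have "(\<Sum>G\<in>interior_faces. of_bool (H = G) * h G) = (\<Sum>G\<in>interior_faces. if H = G then h G else 0)"
      by (intro sum.cong) auto
    also have "\<dots> = h H" using finite_interior_faces that by (simp add: sum.delta)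
    finally show ?thesis .
  qed
  have "(\<Sum>G\<in>interior_faces. dual_laplacian (\<lambda>H. of_bool (H = G)) F * h G)
      = (\<Sum>d\<in>F. of_real (conductance d) * (\<Sum>G\<in>interior_faces.
           (if \<alpha> d = d0 then of_bool (F = G) else if \<alpha> d \<in> Out then 0
            else of_bool (F = G) - of_bool (face (\<alpha> d) = G)) * h G))"
    unfolding dual_laplacian_def sum_distrib_right sum_distrib_left mult.assoc by (rule sum.swap)
  also have "\<dots> = dual_laplacian h F"
    unfolding dual_laplacian_def
  proof (rule sum.cong[OF refl])
    fix d assume "d \<in> F"
    then have "d \<in> D" using F map_face_subset by blast
    then show "complex_of_real (conductance d) * (\<Sum>G\<in>interior_faces.
           (if \<alpha> d = d0 then of_bool (F = G) else if \<alpha> d \<in> Out then 0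
            else of_bool (F = G) - of_bool (face (\<alpha> d) = G)) * h G)
        = complex_of_real (conductance d) *
           (if \<alpha> d = d0 then h F else if \<alpha> d \<in> Out then 0 else h F - h (face (\<alpha> d)))"
      using delta F face_interior[OF \<alpha>_in_D]
      by (simp add: left_diff_distrib sum_subtractf)
  qed
  finally show ?thesis ..
qed

lemma dual_laplacian_surjective:
  "\<exists>h :: 'd set \<Rightarrow> complex. \<forall>F\<in>interior_faces. dual_laplacian h F = b F"
proof -
  have "\<exists>h. \<forall>F\<in>interior_faces.
          (\<Sum>G\<in>interior_faces. dual_laplacian (\<lambda>H. of_bool (H = G)) F * h G) = b F"
  proof (rule finite_linear_system_solvable[OF finite_interior_faces])
    fix h :: "'d set \<Rightarrow> complex"
    assume "\<forall>F\<in>interior_faces. (\<Sum>G\<in>interior_faces. dual_laplacian (\<lambda>H. of_bool (H = G)) F * h G) = 0"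
    then show "\<forall>G\<in>interior_faces. h G = 0"
      using dual_laplacian_as_sum dual_laplacian_injective by simp
  qed
  then show ?thesis using dual_laplacian_as_sum by simp
qed

lemma harmonic_iff_dual_laplacian:
  assumes F: "F \<in> interior_faces"
    and increments: "\<forall>e\<in>Out - {d0}. bd_integral \<sigma> \<alpha> f e = a e"
  shows "harmonic_at_face \<sigma> \<alpha> Out \<rho> f F \<longleftrightarrow>
         dual_laplacian (\<lambda>G. f (FaceV G)) F = boundary_load (f (Bd d0)) a F"
proof -
  have "(\<Sum>d\<in>F. complex_of_real (1 / \<rho> (orb \<alpha> d)) * (f (FaceV F) - f (dual_nbr \<sigma> \<alpha> Out d)))
      = (\<Sum>d\<in>F. of_real (conductance d) * (if \<alpha> d = d0 then f (FaceV F) else if \<alpha> d \<in> Out then 0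
                  else f (FaceV F) - f (FaceV (face (\<alpha> d))))
             - of_real (conductance d) * (if \<alpha> d = d0 then f (Bd d0)
                  else if \<alpha> d \<in> Out then a (\<alpha> d) else 0))"
  proof (rule sum.cong[OF refl])
    fix d assume d: "d \<in> F"
    then have "d \<in> D" using F map_face_subset by blast
    then have "face (\<alpha> (\<alpha> d)) = F" using face_of_member F d \<alpha>_involution by simp
    then have "f (Bd (\<alpha> d)) = f (FaceV F) + a (\<alpha> d)" if "\<alpha> d \<in> Out" "\<alpha> d \<noteq> d0"
      using increments that unfolding bd_integral_def by (simp add: algebra_simps)
    then show "complex_of_real (1 / \<rho> (orb \<alpha> d)) * (f (FaceV F) - f (dual_nbr \<sigma> \<alpha> Out d))
      = of_real (conductance d) * (if \<alpha> d = d0 then f (FaceV F) else if \<alpha> d \<in> Out then 0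
                  else f (FaceV F) - f (FaceV (face (\<alpha> d))))
             - of_real (conductance d) * (if \<alpha> d = d0 then f (Bd d0)
                  else if \<alpha> d \<in> Out then a (\<alpha> d) else 0)"
      using d0_boundary unfolding conductance_def[symmetric] dual_nbr_def by (auto simp: algebra_simps)
  qed
  also have "\<dots> = dual_laplacian (\<lambda>G. f (FaceV G)) F - boundary_load (f (Bd d0)) a F"
    unfolding dual_laplacian_def boundary_load_def by (simp add: sum_subtractf)
  finally show ?thesis unfolding harmonic_at_face_def by simp
qed

lemma dual_vertex_values_determined:
  assumes faces: "\<forall>F\<in>interior_faces. g (FaceV F) = f (FaceV F)"
    and "g (Bd d0) = f (Bd d0)"
    and "\<forall>e\<in>Out - {d0}. bd_integral \<sigma> \<alpha> g e = bd_integral \<sigma> \<alpha> f e"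
    and v: "v \<in> dual_vertices D \<sigma> \<alpha> Out"
  shows "g v = f v"
proof (cases v)
  case (FaceV F)
  then show ?thesis using v faces unfolding dual_vertices_def by auto
next
  case (Bd e)
  then have e: "e \<in> Out" using v unfolding dual_vertices_def by auto
  show ?thesis
  proof (cases "e = d0")
    case True
    then show ?thesis using Bd assms(2) by simp
  next
    case False
    have "face (\<alpha> e) \<in> interior_faces"
      using e face_interior \<alpha>_in_D boundary_edge_crosses Out_subset by blast
    then have "g (FaceV (face (\<alpha> e))) = f (FaceV (face (\<alpha> e)))" using faces by blast
    moreover have "bd_integral \<sigma> \<alpha> g e = bd_integral \<sigma> \<alpha> f e" using assms(3) e False by blast
    ultimately show ?thesis using Bd unfolding bd_integral_def by simp
  qed
qed

lemma harmonic_solution_exists: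
  "\<exists>f. (\<forall>F\<in>interior_faces. harmonic_at_face \<sigma> \<alpha> Out \<rho> f F) \<and> f (Bd d0) = c
       \<and> (\<forall>e\<in>Out - {d0}. bd_integral \<sigma> \<alpha> f e = a e)"
proof -
  obtain h where h: "\<forall>F\<in>interior_faces. dual_laplacian h F = boundary_load c a F"
    using dual_laplacian_surjective by blast
  define f where
    "f v = (case v of FaceV G \<Rightarrow> h G | Bd e \<Rightarrow> if e = d0 then c else h (face (\<alpha> e)) + a e)" for v
  have f_d0: "f (Bd d0) = c" and f_increments: "\<forall>e\<in>Out - {d0}. bd_integral \<sigma> \<alpha> f e = a e"
    unfolding f_def bd_integral_def by auto
  moreover have "\<forall>F\<in>interior_faces. harmonic_at_face \<sigma> \<alpha> Out \<rho> f F"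
    using harmonic_iff_dual_laplacian[OF _ f_increments] h f_d0 by (simp add: f_def)
  ultimately show ?thesis by blast
qed

lemma harmonic_solution_unique:
  assumes f: "\<forall>F\<in>interior_faces. harmonic_at_face \<sigma> \<alpha> Out \<rho> f F" "f (Bd d0) = c"
      "\<forall>e\<in>Out - {d0}. bd_integral \<sigma> \<alpha> f e = a e"
    and g: "\<forall>F\<in>interior_faces. harmonic_at_face \<sigma> \<alpha> Out \<rho> g F" "g (Bd d0) = c"
      "\<forall>e\<in>Out - {d0}. bd_integral \<sigma> \<alpha> g e = a e"
    and v: "v \<in> dual_vertices D \<sigma> \<alpha> Out"
  shows "g v = f v"
proof -
  have "dual_laplacian (\<lambda>G. g (FaceV G) - f (FaceV G)) F = 0" if F: "F \<in> interior_faces" for F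
  proof -
    have "dual_laplacian (\<lambda>G. g (FaceV G)) F = boundary_load c a F"
      using harmonic_iff_dual_laplacian[OF F g(3)] g(1,2) F by simp
    moreover have "dual_laplacian (\<lambda>G. f (FaceV G)) F = boundary_load c a F"
      using harmonic_iff_dual_laplacian[OF F f(3)] f(1,2) F by simp
    ultimately show ?thesis by (simp add: dual_laplacian_diff)
  qed
  then have "\<forall>F\<in>interior_faces. g (FaceV F) = f (FaceV F)"
    using dual_laplacian_injective by fastforce
  then show ?thesis using dual_vertex_values_determined f g v by simp
qed

end

theorem mainTheorem7:
  fixes D :: "'d set" and \<sigma> \<alpha> :: "'d \<Rightarrow> 'd" and Out :: "'d set"
    and \<rho> :: "'d set \<Rightarrow> real" and d0 :: 'd and f0 :: complex and a :: "'d \<Rightarrow> complex"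
  assumes "disc_map D \<sigma> \<alpha> Out"
    and "\<forall>e\<in>map_edges D \<alpha>. \<rho> e > 0"
    and "d0 \<in> Out"
  shows "\<exists>f. (\<forall>F\<in>map_faces D \<sigma> \<alpha> - {Out}. harmonic_at_face \<sigma> \<alpha> Out \<rho> f F)
             \<and> f (Bd d0) = f0
             \<and> (\<forall>d\<in>Out - {d0}. bd_integral \<sigma> \<alpha> f d = a d)
             \<and> (\<forall>g. ((\<forall>F\<in>map_faces D \<sigma> \<alpha> - {Out}. harmonic_at_face \<sigma> \<alpha> Out \<rho> g F)
                      \<and> g (Bd d0) = f0
                      \<and> (\<forall>d\<in>Out - {d0}. bd_integral \<sigma> \<alpha> g d = a d))
                   \<longrightarrow> (\<forall>v\<in>dual_vertices D \<sigma> \<alpha> Out. g v = f v))"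
proof -
  interpret weighted_disc_map D \<sigma> \<alpha> Out \<rho> d0
    using assms by unfold_locales
  obtain f where f: "\<forall>F\<in>interior_faces. harmonic_at_face \<sigma> \<alpha> Out \<rho> f F" "f (Bd d0) = f0"
      "\<forall>e\<in>Out - {d0}. bd_integral \<sigma> \<alpha> f e = a e"
    using harmonic_solution_exists by blast
  have "g v = f v"
    if "(\<forall>F\<in>interior_faces. harmonic_at_face \<sigma> \<alpha> Out \<rho> g F) \<and> g (Bd d0) = f0
          \<and> (\<forall>e\<in>Out - {d0}. bd_integral \<sigma> \<alpha> g e = a e)"
      and "v \<in> dual_vertices D \<sigma> \<alpha> Out" for g v
    using that harmonic_solution_unique[OF f, of g v] by blast
  with f show ?thesis by (intro exI[of _ f]) blast
qed

end
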